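(* In the modified multi-phase process described in the context, every element $x\in S^-_{1/6}$ that is considered by the process passes the preliminary test and all the following $\eta$ tests with probability at least $1-\frac{5}{n^2}$.
   Context: Let $n\ge2$ be an integer such that $m=n/\log_2 n$ is an integer, and let $S'$ be a set of $m$ distinct elements of a totally ordered set. For $\rho\in(0,1]$, $S^-_\rho$ denotes the set of the $\lceil \rho m\rceil$ smallest elements of $S'$ and $S^+_\rho=S'\setminus S^-_\rho$. There are two oracles $\mathcal{O}_1,\mathcal{O}_2$ which can be queried with an element $x\in S'$ and answer "relevant" or "not relevant" in constant time, all answers being mutually independent; for constants $p_1,p_2\in[0,\tfrac12)$: $\mathcal{O}_1$ reports $x$ relevant with probability at least $1-p_1$ if $x\in S^-_{1/6}$ and at most $p_1$ if $x\in S^+_{1/3}$; $\mathcal{O}_2$ reports $x$ relevant with probability at least $1-p_2$ if $x\in S^-_{1/3}$ and at most $p_2$ if $x\in S^+_{3/4}$. For $q\in[0,\tfrac12)$ let $c_q=\lceil 4(1-q)/(1-2q)^2\rceil$. Let $\eta = 1+\lceil \log_2 \frac{n}{\log_2 n}\rceil$. Modified multi-phase process: the elements of $S'$ are considered one at a time. For the current element $x$, a preliminary test is performed consisting of $8c_{p_1}\lceil \ln n\rceil+1$ queries to $\mathcal{O}_1$ on $x$; it is passed if the majority report $x$ relevant, otherwise $x$ is discarded and the next element is considered. Then, for $i=1,\dots,\eta$, the $i$-th test consists of $2\lceil 2^i\ln n\rceil c_{p_2}+1$ queries to $\mathcal{O}_2$ on $x$ and is passed if the majority report $x$ relevant; if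 $x$ fails a test it is discarded and the next element is considered. The process returns the first element that passes the $\eta$-th test. Here $\ln$ is the natural logarithm. *)

theory Defs
  imports "HOL-Probability.Probability"
begin

(* S^-_rho: the ceil(rho * |S|) smallest elements of the finite set S *)
definition S_minus :: "real \<Rightarrow> 'a::linorder set \<Rightarrow> 'a set" where
  "S_minus \<rho> S = {y \<in> S. real (card {z \<in> S. z < y}) < of_int \<lceil>\<rho> * real (card S)\<rceil>}"

definition cq :: "real \<Rightarrow> nat" where
  "cq q = nat \<lceil>4 * (1 - q) / (1 - 2 * q)^2\<rceil>"

definition eta :: "nat \<Rightarrow> nat" where
  "eta n = 1 + nat \<lceil>log 2 (real n / log 2 (real n))\<rceil>"

(* number of queries of test j: j = 0 is the preliminary test (oracle O1),
   j = 1..eta are the subsequent tests (oracle O2) *)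
definition num_queries :: "nat \<Rightarrow> real \<Rightarrow> real \<Rightarrow> nat \<Rightarrow> nat" where
  "num_queries n p1 p2 j =
     (if j = 0 then 8 * cq p1 * nat \<lceil>ln (real n)\<rceil> + 1
      else 2 * nat \<lceil>2 ^ j * ln (real n)\<rceil> * cq p2 + 1)"

definition query_set :: "nat \<Rightarrow> real \<Rightarrow> real \<Rightarrow> (nat \<times> nat) set" where
  "query_set n p1 p2 = {(j, t). j \<le> eta n \<and> t < num_queries n p1 p2 j}"

(* joint distribution of all (mutually independent) oracle answers on x;
   True = "relevant". Test 0 queries O1 (relevance prob. a1), the others O2 (prob. a2). *)
definition answers :: "nat \<Rightarrow> real \<Rightarrow> real \<Rightarrow> real \<Rightarrow> real \<Rightarrow> (nat \<times> nat \<Rightarrow> bool) pmf" where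
  "answers n p1 p2 a1 a2 =
     Pi_pmf (query_set n p1 p2) False
       (\<lambda>(j, t). bernoulli_pmf (if j = 0 then a1 else a2))"

definition passes_test :: "nat \<Rightarrow> real \<Rightarrow> real \<Rightarrow> (nat \<times> nat \<Rightarrow> bool) \<Rightarrow> nat \<Rightarrow> bool" where
  "passes_test n p1 p2 \<omega> j \<longleftrightarrow>
     2 * card {t. t < num_queries n p1 p2 j \<and> \<omega> (j, t)} > num_queries n p1 p2 j"

definition passes_all :: "nat \<Rightarrow> real \<Rightarrow> real \<Rightarrow> (nat \<times> nat \<Rightarrow> bool) \<Rightarrow> bool" where
  "passes_all n p1 p2 \<omega> \<longleftrightarrow> (\<forall>j \<le> eta n. passes_test n p1 p2 \<omega> j)"

end

theory Submission imports Defs begin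

text \<open>Each test on \<open>x\<close> consists of \<open>N \<ge> 4 c\<^sub>q ln n\<close> independent queries, each answered
  "relevant" with probability \<open>a \<ge> 1 - q\<close>, and \<open>c\<^sub>q\<close> is chosen so that \<open>c\<^sub>q (1/2 - q)\<^sup>2 \<ge> 1/2\<close>.
  Hoeffding's inequality bounds the probability that at most half of the answers are
  "relevant" by \<open>exp (-2 N (a - 1/2)\<^sup>2) \<le> n\<^sup>-\<^sup>4\<close>, and a union bound over the
  \<open>\<eta> + 1 \<le> n + 2\<close> tests gives a failure probability of at most \<open>(n + 2) / n\<^sup>4 \<le> 5 / n\<^sup>2\<close>.\<close>

lemma map_Pi_pmf_count_eq_binomial_pmf:
  fixes Q B :: "'b set" and P :: "'b \<Rightarrow> bool pmf" and a :: real
  assumes "finite Q" "B \<subseteq> Q" "\<And>x. x \<in> B \<Longrightarrow> P x = bernoulli_pmf a" "0 \<le> a" "a \<le> 1"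
  shows "map_pmf (\<lambda>\<omega>. card {x\<in>B. \<omega> x}) (Pi_pmf Q False P) = binomial_pmf (card B) a"
proof -
  have "finite B" using assms(1,2) finite_subset by blast
  have "binomial_pmf (card B) a
      = map_pmf (\<lambda>\<omega>. card {x\<in>B. \<omega> x}) (Pi_pmf B False (\<lambda>_. bernoulli_pmf a))"
    using binomial_pmf_altdef'[OF \<open>finite B\<close> refl, of a False] assms(4,5) by simp
  also have "Pi_pmf B False (\<lambda>_. bernoulli_pmf a) = Pi_pmf B False P"
    by (rule Pi_pmf_cong) (auto simp: assms(3))
  also have "\<dots> = map_pmf (\<lambda>\<omega> x. if x \<in> B then \<omega> x else False) (Pi_pmf Q False P)"
    by (rule Pi_pmf_subset[OF assms(1,2)])
  finally show ?thesis
    by (simp add: map_pmf_comp o_def cong: conj_cong)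
qed

lemma binomial_pmf_prob_majority_fails_le:
  fixes N :: nat and a :: real
  assumes "N > 0" "1/2 \<le> a" "a \<le> 1"
  shows "measure_pmf.prob (binomial_pmf N a) {k. 2 * k \<le> N} \<le> exp (-2 * N * (a - 1/2)^2)"
proof -
  have "measure_pmf.prob (binomial_pmf N a) {k. 2 * k \<le> N}
      \<le> measure_pmf.prob (binomial_pmf N a) {k. real k \<le> real N * a - N * (a - 1/2)}"
    by (rule measure_pmf.finite_measure_mono) (auto simp: algebra_simps)
  also have "\<dots> \<le> exp (- 2 * (N * (a - 1/2))\<^sup>2 / real N)"
    by (rule binomial_distribution.prob_le) (use assms in \<open>auto simp: binomial_distribution_def\<close>)
  also have "- 2 * (N * (a - 1/2))\<^sup>2 / real N = -2 * N * (a - 1/2)^2"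
    using assms(1) by (simp add: power2_eq_square field_simps)
  finally show ?thesis .
qed

lemma cq_mult_margin_ge:
  assumes "0 \<le> q" "q < 1/2"
  shows "real (cq q) * (1/2 - q)^2 \<ge> 1/2"
proof -
  have margin: "(1 - 2 * q)^2 = 4 * (1/2 - q)^2"
    by (simp add: power2_eq_square algebra_simps)
  have "4 * (1 - q) / (1 - 2 * q)^2 \<le> real (cq q)"
    unfolding cq_def by linarith
  then have "4 * (1 - q) \<le> real (cq q) * (1 - 2 * q)^2"
    using assms by (simp add: divide_le_eq)
  then show ?thesis
    using assms unfolding margin by simp
qed

lemma num_queries_ge:
  assumes "n \<ge> 1"
  shows "real (num_queries n p1 p2 j) \<ge> 4 * real (cq (if j = 0 then p1 else p2)) * ln (real n)"
proof (cases "j = 0")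
  case True
  have "real (cq p1) * ln (real n) \<le> real (cq p1) * real (nat \<lceil>ln (real n)\<rceil>)"
    by (intro mult_left_mono) (auto intro: real_nat_ceiling_ge)
  moreover have "0 \<le> real (cq p1) * ln (real n)"
    using assms by simp
  ultimately show ?thesis
    using True by (simp add: num_queries_def)
next
  case False
  have "(2::real) \<le> 2 ^ j"
    using False by (metis One_nat_def neq0_conv one_le_numeral power_increasing power_one_right
        Suc_leI)
  then have "2 * ln (real n) \<le> 2 ^ j * ln (real n)"
    using assms by (intro mult_right_mono) auto
  then have "2 * ln (real n) \<le> real (nat \<lceil>2 ^ j * ln (real n)\<rceil>)"
    by linarith
  then have "2 * ln (real n) * real (cq p2) \<le> real (nat \<lceil>2 ^ j * ln (real n)\<rceil>) * real (cq p2)"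
    by (intro mult_right_mono) auto
  then show ?thesis
    using False by (simp add: num_queries_def algebra_simps)
qed

lemma num_queries_mult_margin_ge:
  fixes j :: nat
  assumes "n \<ge> 1" "0 \<le> p1" "p1 < 1/2" "0 \<le> p2" "p2 < 1/2"
  defines "q \<equiv> if j = 0 then p1 else p2"
  shows "2 * ln (real n) \<le> real (num_queries n p1 p2 j) * (1/2 - q)^2"
proof -
  have "0 \<le> q" "q < 1/2" using assms by (auto simp: q_def)
  have "4 * ln (real n) * (1/2) \<le> 4 * ln (real n) * (real (cq q) * (1/2 - q)^2)"
    using cq_mult_margin_ge[OF \<open>0 \<le> q\<close> \<open>q < 1/2\<close>] assms(1) by (intro mult_left_mono) auto
  then have "2 * ln (real n) \<le> 4 * ln (real n) * (real (cq q) * (1/2 - q)^2)"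
    by simp
  also have "\<dots> = 4 * real (cq q) * ln (real n) * (1/2 - q)^2"
    by (simp add: algebra_simps)
  also have "\<dots> \<le> real (num_queries n p1 p2 j) * (1/2 - q)^2"
    using num_queries_ge[OF assms(1), where j = j] by (intro mult_right_mono) (auto simp: q_def)
  finally show ?thesis .
qed

lemma eta_le:
  assumes "n \<ge> 2"
  shows "eta n \<le> n + 1"
proof -
  have log_ge: "log 2 (real n) \<ge> 1" using assms by (simp add: le_log_iff)
  then have "real n / log 2 (real n) \<le> real n" "real n / log 2 (real n) > 0"
    using assms by (simp_all add: divide_le_eq)
  then have "log 2 (real n / log 2 (real n)) \<le> log 2 (real n)" by simp
  also have "log 2 (real n) < real n" using assms by (intro log2_of_power_less less_exp) auto
  finally show ?thesis unfolding eta_def by linarith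
qed

lemma S_minus_mono:
  assumes "\<rho> \<le> \<rho>'"
  shows "S_minus \<rho> S \<subseteq> S_minus \<rho>' S"
proof -
  have "\<lceil>\<rho> * real (card S)\<rceil> \<le> \<lceil>\<rho>' * real (card S)\<rceil>"
    using assms by (intro ceiling_mono mult_right_mono) auto
  then show ?thesis
    unfolding S_minus_def by (auto intro: less_le_trans)
qed

lemma prob_fails_test_le:
  assumes "n \<ge> 1" "j \<le> eta n"
    and "0 \<le> p1" "p1 < 1/2" "0 \<le> p2" "p2 < 1/2"
    and "1 - p1 \<le> a1" "a1 \<le> 1" "1 - p2 \<le> a2" "a2 \<le> 1"
  shows "measure_pmf.prob (answers n p1 p2 a1 a2) {\<omega>. \<not> passes_test n p1 p2 \<omega> j}
           \<le> 1 / real n ^ 4"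
proof -
  define N where "N = num_queries n p1 p2 j"
  define a where "a = (if j = 0 then a1 else a2)"
  define q where "q = (if j = 0 then p1 else p2)"
  define B where "B = Pair j ` {..<N}"
  have "1 - q \<le> a" "a \<le> 1"
    using assms by (auto simp: a_def q_def)
  have "card B = N" "N > 0"
    by (simp_all add: B_def N_def num_queries_def card_image inj_on_def)
  have "B \<subseteq> query_set n p1 p2" "finite (query_set n p1 p2)"
    using assms(2) by (auto simp: B_def N_def query_set_def
        intro: finite_subset[of _ "SIGMA j:{..eta n}. {..<num_queries n p1 p2 j}"])
  have count: "card {t. t < N \<and> \<omega> (j, t)} = card {y\<in>B. \<omega> y}" for \<omega>
  proof -
    have "{y\<in>B. \<omega> y} = Pair j ` {t. t < N \<and> \<omega> (j, t)}" by (auto simp: B_def)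
    then show ?thesis by (simp add: card_image inj_on_def)
  qed
  have "map_pmf (\<lambda>\<omega>. card {y\<in>B. \<omega> y}) (answers n p1 p2 a1 a2) = binomial_pmf N a"
    unfolding answers_def \<open>card B = N\<close>[symmetric]
    using \<open>1 - q \<le> a\<close> \<open>a \<le> 1\<close> assms(4,6)
    by (intro map_Pi_pmf_count_eq_binomial_pmf \<open>finite (query_set n p1 p2)\<close> \<open>B \<subseteq> _\<close>)
      (auto simp: B_def a_def q_def split: if_splits)
  then have "measure_pmf.prob (binomial_pmf N a) {k. 2 * k \<le> N}
      = measure_pmf.prob (answers n p1 p2 a1 a2) ((\<lambda>\<omega>. card {y\<in>B. \<omega> y}) -` {k. 2 * k \<le> N})"
    by (metis measure_map_pmf)
  then have "measure_pmf.prob (answers n p1 p2 a1 a2) {\<omega>. \<not> passes_test n p1 p2 \<omega> j}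
      = measure_pmf.prob (binomial_pmf N a) {k. 2 * k \<le> N}"
    by (simp add: passes_test_def count N_def[symmetric] not_less vimage_def)
  also have "\<dots> \<le> exp (-2 * N * (a - 1/2)^2)"
    using \<open>N > 0\<close> \<open>1 - q \<le> a\<close> \<open>a \<le> 1\<close> assms(4,6)
    by (intro binomial_pmf_prob_majority_fails_le) (auto simp: q_def split: if_splits)
  also have "\<dots> \<le> exp (- (4 * ln (real n)))"
  proof -
    have "(1/2 - q)^2 \<le> (a - 1/2)^2"
      using \<open>1 - q \<le> a\<close> assms(4,6) by (intro power_mono) (auto simp: q_def)
    then have "real N * (1/2 - q)^2 \<le> real N * (a - 1/2)^2"
      by (intro mult_left_mono) auto
    then show ?thesis
      using num_queries_mult_margin_ge[OF assms(1,3-6), of j] by (simp add: N_def q_def)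
  qed
  also have "\<dots> = 1 / real n ^ 4"
  proof -
    have "4 * ln (real n) = ln (real n ^ 4)"
      using assms(1) by (simp add: ln_realpow)
    then show ?thesis
      using assms(1) by (simp add: exp_minus inverse_eq_divide)
  qed
  finally show ?thesis .
qed

lemma prob_passes_all_ge:
  assumes "n \<ge> 2"
    and "0 \<le> p1" "p1 < 1/2" "0 \<le> p2" "p2 < 1/2"
    and "1 - p1 \<le> a1" "a1 \<le> 1" "1 - p2 \<le> a2" "a2 \<le> 1"
  shows "measure_pmf.prob (answers n p1 p2 a1 a2) {\<omega>. passes_all n p1 p2 \<omega>} \<ge> 1 - 5 / (real n)^2"
proof -
  let ?M = "answers n p1 p2 a1 a2"
  have "{\<omega>. \<not> passes_all n p1 p2 \<omega>} = (\<Union>j\<in>{..eta n}. {\<omega>. \<not> passes_test n p1 p2 \<omega> j})"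
    by (auto simp: passes_all_def)
  then have "measure_pmf.prob ?M {\<omega>. \<not> passes_all n p1 p2 \<omega>}
      \<le> (\<Sum>j\<in>{..eta n}. measure_pmf.prob ?M {\<omega>. \<not> passes_test n p1 p2 \<omega> j})"
    by (simp add: measure_pmf.finite_measure_subadditive_finite)
  also have "\<dots> \<le> (\<Sum>j\<in>{..eta n}. 1 / real n ^ 4)"
    using assms by (intro sum_mono prob_fails_test_le) auto
  also have "\<dots> = real (eta n + 1) / real n ^ 4" by simp
  also have "\<dots> \<le> 5 / real n ^ 2"
  proof -
    have "real (eta n + 1) \<le> real n + 2" using eta_le[OF assms(1)] by simp
    also have "\<dots> \<le> 5 * real n ^ 2"
    proof -
      have "2 * real n \<le> real n * real n"
        using assms(1) by (intro mult_right_mono) auto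
      then show ?thesis
        using assms(1) unfolding power2_eq_square by linarith
    qed
    finally show ?thesis
      using assms(1) by (simp add: divide_le_eq power4_eq_xxxx power2_eq_square)
  qed
  finally have "measure_pmf.prob ?M {\<omega>. \<not> passes_all n p1 p2 \<omega>} \<le> 5 / real n ^ 2" .
  moreover have "{\<omega>. passes_all n p1 p2 \<omega>} = space ?M - {\<omega>. \<not> passes_all n p1 p2 \<omega>}"
    by auto
  ultimately show ?thesis
    using measure_pmf.prob_compl[of "{\<omega>. \<not> passes_all n p1 p2 \<omega>}" ?M] by simp
qed

theorem lemma14:
  fixes n :: nat and S' :: "'a::linorder set" and x :: 'a
    and p1 p2 :: real and r1 r2 :: "'a \<Rightarrow> real"
  assumes n: "n \<ge> 2"
    and m_int: "real n / log 2 (real n) = real (card S')"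
    and fin: "finite S'"
    and p1: "0 \<le> p1" "p1 < 1/2" and p2: "0 \<le> p2" "p2 < 1/2"
    and r_range: "\<And>y. y \<in> S' \<Longrightarrow> 0 \<le> r1 y \<and> r1 y \<le> 1 \<and> 0 \<le> r2 y \<and> r2 y \<le> 1"
    and O1_low: "\<And>y. y \<in> S_minus (1/6) S' \<Longrightarrow> r1 y \<ge> 1 - p1"
    and O1_high: "\<And>y. y \<in> S' - S_minus (1/3) S' \<Longrightarrow> r1 y \<le> p1"
    and O2_low: "\<And>y. y \<in> S_minus (1/3) S' \<Longrightarrow> r2 y \<ge> 1 - p2"
    and O2_high: "\<And>y. y \<in> S' - S_minus (3/4) S' \<Longrightarrow> r2 y \<le> p2"
    and x: "x \<in> S_minus (1/6) S'"
  shows "measure_pmf.prob (answers n p1 p2 (r1 x) (r2 x)) {\<omega>. passes_all n p1 p2 \<omega>}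
           \<ge> 1 - 5 / (real n)^2"
proof -
  have "x \<in> S'" using x by (simp add: S_minus_def)
  have "x \<in> S_minus (1/3) S'" using x S_minus_mono[of "1/6" "1/3"] by auto
  then show ?thesis
    using O1_low[OF x] O2_low r_range[OF \<open>x \<in> S'\<close>]
    by (intro prob_passes_all_ge n p1 p2) auto
qed

end
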